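(* For any metric spaces $(X,d_X)$ and $(Y,d_Y)$, $$\tilde d_{\mathrm{GH}}(X,Y)\le d_{\mathrm{GH}}(X,Y)\le 2\,\tilde d_{\mathrm{GH}}(X,Y).$$
   Context: For (not necessarily continuous) maps $f:X\to Y$, $g:Y\to X$: $\mathrm{dis}(f)=\sup_{x,x'\in X}|d_X(x,x')-d_Y(f(x),f(x'))|$ (similarly $\mathrm{dis}(g)$), $\mathrm{codis}(f,g)=\sup_{x\in X,y\in Y}|d_X(x,g(y))-d_Y(y,f(x))|$, and $\widetilde{\mathrm{codis}}(f,g)=\max\{\sup_{x\in X}d_X(x,g(f(x))),\sup_{y\in Y}d_Y(y,f(g(y)))\}$. The Gromov–Hausdorff distance is $d_{\mathrm{GH}}(X,Y)=\tfrac12\inf_{f,g}\max\{\mathrm{dis}(f),\mathrm{dis}(g),\mathrm{codis}(f,g)\}$, and the altered Gromov–Hausdorff distance is $\tilde d_{\mathrm{GH}}(X,Y)=\tfrac12\inf_{f,g}\max\{\mathrm{dis}(f),\mathrm{dis}(g),\widetilde{\mathrm{codis}}(f,g)\}$, both infima over all maps $f:X\to Y$, $g:Y\to X$. *)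

theory Defs
  imports "HOL-Analysis.Analysis" "HOL-Library.Extended_Nonnegative_Real"
begin

text \<open>Suprema are taken in [0, \<infinity>] (ennreal), so unbounded spaces give value \<infinity>.\<close>

definition dis :: "'a set \<Rightarrow> ('a \<Rightarrow> 'a \<Rightarrow> real) \<Rightarrow> ('b \<Rightarrow> 'b \<Rightarrow> real) \<Rightarrow> ('a \<Rightarrow> 'b) \<Rightarrow> ennreal" where
  "dis X dX dY f = (SUP p \<in> X \<times> X. ennreal \<bar>dX (fst p) (snd p) - dY (f (fst p)) (f (snd p))\<bar>)"

definition codis :: "'a set \<Rightarrow> ('a \<Rightarrow> 'a \<Rightarrow> real) \<Rightarrow> 'b set \<Rightarrow> ('b \<Rightarrow> 'b \<Rightarrow> real)
    \<Rightarrow> ('a \<Rightarrow> 'b) \<Rightarrow> ('b \<Rightarrow> 'a) \<Rightarrow> ennreal" where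
  "codis X dX Y dY f g = (SUP p \<in> X \<times> Y. ennreal \<bar>dX (fst p) (g (snd p)) - dY (snd p) (f (fst p))\<bar>)"

definition codis_alt :: "'a set \<Rightarrow> ('a \<Rightarrow> 'a \<Rightarrow> real) \<Rightarrow> 'b set \<Rightarrow> ('b \<Rightarrow> 'b \<Rightarrow> real)
    \<Rightarrow> ('a \<Rightarrow> 'b) \<Rightarrow> ('b \<Rightarrow> 'a) \<Rightarrow> ennreal" where
  "codis_alt X dX Y dY f g = max (SUP x \<in> X. ennreal (dX x (g (f x))))
                                 (SUP y \<in> Y. ennreal (dY y (f (g y))))"

definition GH_dist :: "'a set \<Rightarrow> ('a \<Rightarrow> 'a \<Rightarrow> real) \<Rightarrow> 'b set \<Rightarrow> ('b \<Rightarrow> 'b \<Rightarrow> real) \<Rightarrow> ennreal" where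
  "GH_dist X dX Y dY = (INF fg \<in> {(f, g). f \<in> X \<rightarrow> Y \<and> g \<in> Y \<rightarrow> X}.
      max (max (dis X dX dY (fst fg)) (dis Y dY dX (snd fg))) (codis X dX Y dY (fst fg) (snd fg))) / 2"

definition GH_dist_alt :: "'a set \<Rightarrow> ('a \<Rightarrow> 'a \<Rightarrow> real) \<Rightarrow> 'b set \<Rightarrow> ('b \<Rightarrow> 'b \<Rightarrow> real) \<Rightarrow> ennreal" where
  "GH_dist_alt X dX Y dY = (INF fg \<in> {(f, g). f \<in> X \<rightarrow> Y \<and> g \<in> Y \<rightarrow> X}.
      max (max (dis X dX dY (fst fg)) (dis Y dY dX (snd fg))) (codis_alt X dX Y dY (fst fg) (snd fg))) / 2"

end

theory Submission
  imports Defs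
begin

text \<open>Both inequalities hold pair by pair for the costs minimised in the two definitions.
  Evaluating the codistortion term \<open>\<bar>d\<^sub>X(x, g y) - d\<^sub>Y(y, f x)\<bar>\<close> at \<open>y = f x\<close>, resp.
  \<open>x = g y\<close>, gives \<open>d\<^sub>X(x, g(f x))\<close>, resp. \<open>d\<^sub>Y(y, f(g y))\<close>, so the altered codistortion
  is at most the codistortion. Conversely, the triangle inequality through \<open>f(g y)\<close> or
  \<open>g(f x)\<close> bounds each codistortion term by a distortion term plus an altered codistortion
  term, so the codistortion is at most \<open>max(dis f, dis g) + codis~(f, g)\<close>, which is at most
  twice the altered cost.\<close>

lemma dis_upper:
  "\<lbrakk>a \<in> X; b \<in> X\<rbrakk> \<Longrightarrow> ennreal \<bar>dX a b - dY (f a) (f b)\<bar> \<le> dis X dX dY f"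
  unfolding dis_def by (rule SUP_upper2[of "(a, b)"]) auto

lemma codis_upper:
  "\<lbrakk>x \<in> X; y \<in> Y\<rbrakk> \<Longrightarrow> ennreal \<bar>dX x (g y) - dY y (f x)\<bar> \<le> codis X dX Y dY f g"
  unfolding codis_def by (rule SUP_upper2[of "(x, y)"]) auto

lemma codis_alt_upper_left:
  "x \<in> X \<Longrightarrow> ennreal (dX x (g (f x))) \<le> codis_alt X dX Y dY f g"
  unfolding codis_alt_def by (rule order_trans[OF SUP_upper max.cobounded1])

lemma codis_alt_upper_right:
  "y \<in> Y \<Longrightarrow> ennreal (dY y (f (g y))) \<le> codis_alt X dX Y dY f g"
  unfolding codis_alt_def by (rule order_trans[OF SUP_upper max.cobounded2])

lemma codis_alt_le_codis:
  assumes MX: "Metric_space X dX" and MY: "Metric_space Y dY"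
    and f: "f \<in> X \<rightarrow> Y" and g: "g \<in> Y \<rightarrow> X"
  shows "codis_alt X dX Y dY f g \<le> codis X dX Y dY f g"
  unfolding codis_alt_def
proof (intro max.boundedI SUP_least)
  fix x assume x: "x \<in> X"
  then have "f x \<in> Y" using f by blast
  with x have "ennreal \<bar>dX x (g (f x)) - dY (f x) (f x)\<bar> \<le> codis X dX Y dY f g"
    by (rule codis_upper)
  then show "ennreal (dX x (g (f x))) \<le> codis X dX Y dY f g"
    using \<open>f x \<in> Y\<close> by (simp add: Metric_space.mdist_zero[OF MY] Metric_space.nonneg[OF MX])
next
  fix y assume y: "y \<in> Y"
  then have "g y \<in> X" using g by blast
  from this y have "ennreal \<bar>dX (g y) (g y) - dY y (f (g y))\<bar> \<le> codis X dX Y dY f g"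
    by (rule codis_upper)
  then show "ennreal (dY y (f (g y))) \<le> codis X dX Y dY f g"
    using \<open>g y \<in> X\<close> by (simp add: Metric_space.mdist_zero[OF MX] Metric_space.nonneg[OF MY])
qed

lemma codis_term_le:
  assumes MX: "Metric_space X dX" and MY: "Metric_space Y dY"
    and x: "x \<in> X" and y: "y \<in> Y" and f: "f \<in> X \<rightarrow> Y" and g: "g \<in> Y \<rightarrow> X"
  shows "\<bar>dX x (g y) - dY y (f x)\<bar> \<le> dY y (f (g y)) + \<bar>dX (g y) x - dY (f (g y)) (f x)\<bar> \<or>
         \<bar>dX x (g y) - dY y (f x)\<bar> \<le> dX x (g (f x)) + \<bar>dY (f x) y - dX (g (f x)) (g y)\<bar>"
proof -
  have "f x \<in> Y" "g y \<in> X" "g (f x) \<in> X" "f (g y) \<in> Y"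
    using f g x y by auto
  then have "dY y (f x) \<le> dY y (f (g y)) + dY (f (g y)) (f x)"
    and "dX x (g y) \<le> dX x (g (f x)) + dX (g (f x)) (g y)"
    and "dX (g y) x = dX x (g y)" and "dY (f x) y = dY y (f x)"
    using x y Metric_space.triangle[OF MX] Metric_space.triangle[OF MY]
      Metric_space.commute[OF MX] Metric_space.commute[OF MY] by metis+
  then show ?thesis by linarith
qed

lemma codis_le_dis_plus_codis_alt:
  assumes MX: "Metric_space X dX" and MY: "Metric_space Y dY"
    and f: "f \<in> X \<rightarrow> Y" and g: "g \<in> Y \<rightarrow> X"
  shows "codis X dX Y dY f g \<le> max (dis X dX dY f) (dis Y dY dX g) + codis_alt X dX Y dY f g"
    (is "_ \<le> ?D + ?C")
  unfolding codis_def
proof (rule SUP_least, clarsimp)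
  fix x y assume x: "x \<in> X" and y: "y \<in> Y"
  have "f x \<in> Y" "g y \<in> X" using f g x y by auto
  have nonneg: "0 \<le> dX a b" "0 \<le> dY c d" for a b c d
    using Metric_space.nonneg[OF MX] Metric_space.nonneg[OF MY] by auto
  have via_fgy: "ennreal (dY y (f (g y)) + \<bar>dX (g y) x - dY (f (g y)) (f x)\<bar>) \<le> ?D + ?C"
  proof -
    have "ennreal \<bar>dX (g y) x - dY (f (g y)) (f x)\<bar> \<le> ?D"
      using dis_upper[OF \<open>g y \<in> X\<close> x] by (rule order_trans) simp
    with codis_alt_upper_right[where X=X and dX=dX, OF y] show ?thesis
      by (simp add: nonneg ennreal_plus add.commute add_mono)
  qed
  have via_gfx: "ennreal (dX x (g (f x)) + \<bar>dY (f x) y - dX (g (f x)) (g y)\<bar>) \<le> ?D + ?C"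
  proof -
    have "ennreal \<bar>dY (f x) y - dX (g (f x)) (g y)\<bar> \<le> ?D"
      using dis_upper[OF \<open>f x \<in> Y\<close> y] by (rule order_trans) simp
    with codis_alt_upper_left[where Y=Y and dY=dY, OF x] show ?thesis
      by (simp add: nonneg ennreal_plus add.commute add_mono)
  qed
  from codis_term_le[OF MX MY x y f g] show "ennreal \<bar>dX x (g y) - dY y (f x)\<bar> \<le> ?D + ?C"
    using via_fgy via_gfx by (meson ennreal_leI order_trans)
qed

lemma INF_divide_le_INF_ennreal:
  fixes F G :: "'a \<Rightarrow> ennreal"
  assumes "c \<noteq> 0" "c \<noteq> top" and "\<And>s. s \<in> S \<Longrightarrow> F s \<le> c * G s"
  shows "(INF s\<in>S. F s) / c \<le> (INF s\<in>S. G s)"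
proof (rule INF_greatest)
  fix s assume "s \<in> S"
  then have "(INF s\<in>S. F s) / c \<le> c * G s / c"
    by (intro divide_right_mono_ennreal INF_lower2[OF \<open>s \<in> S\<close>] assms(3))
  also have "\<dots> = G s"
    using ennreal_mult_divide_eq[OF assms(1,2), of "G s"] by (simp add: mult.commute)
  finally show "(INF s\<in>S. F s) / c \<le> G s" .
qed

definition GH_cost :: "'a set \<Rightarrow> ('a \<Rightarrow> 'a \<Rightarrow> real) \<Rightarrow> 'b set \<Rightarrow> ('b \<Rightarrow> 'b \<Rightarrow> real)
    \<Rightarrow> ('a \<Rightarrow> 'b) \<Rightarrow> ('b \<Rightarrow> 'a) \<Rightarrow> ennreal" where
  "GH_cost X dX Y dY f g = max (max (dis X dX dY f) (dis Y dY dX g)) (codis X dX Y dY f g)"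

definition GH_cost_alt :: "'a set \<Rightarrow> ('a \<Rightarrow> 'a \<Rightarrow> real) \<Rightarrow> 'b set \<Rightarrow> ('b \<Rightarrow> 'b \<Rightarrow> real)
    \<Rightarrow> ('a \<Rightarrow> 'b) \<Rightarrow> ('b \<Rightarrow> 'a) \<Rightarrow> ennreal" where
  "GH_cost_alt X dX Y dY f g = max (max (dis X dX dY f) (dis Y dY dX g)) (codis_alt X dX Y dY f g)"

lemma GH_dist_eq_INF_GH_cost:
  "GH_dist X dX Y dY =
    (INF fg\<in>{(f, g). f \<in> X \<rightarrow> Y \<and> g \<in> Y \<rightarrow> X}. GH_cost X dX Y dY (fst fg) (snd fg)) / 2"
  unfolding GH_dist_def GH_cost_def ..

lemma GH_dist_alt_eq_INF_GH_cost_alt: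
  "GH_dist_alt X dX Y dY =
    (INF fg\<in>{(f, g). f \<in> X \<rightarrow> Y \<and> g \<in> Y \<rightarrow> X}. GH_cost_alt X dX Y dY (fst fg) (snd fg)) / 2"
  unfolding GH_dist_alt_def GH_cost_alt_def ..

lemma GH_cost_alt_le_GH_cost:
  assumes "Metric_space X dX" "Metric_space Y dY" "f \<in> X \<rightarrow> Y" "g \<in> Y \<rightarrow> X"
  shows "GH_cost_alt X dX Y dY f g \<le> GH_cost X dX Y dY f g"
  unfolding GH_cost_alt_def GH_cost_def by (intro max.mono order_refl codis_alt_le_codis[OF assms])

lemma GH_cost_le_twice_GH_cost_alt:
  assumes "Metric_space X dX" "Metric_space Y dY" "f \<in> X \<rightarrow> Y" "g \<in> Y \<rightarrow> X"
  shows "GH_cost X dX Y dY f g \<le> 2 * GH_cost_alt X dX Y dY f g"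
proof -
  define D where "D = max (dis X dX dY f) (dis Y dY dX g)"
  define C where "C = codis_alt X dX Y dY f g"
  have "GH_cost X dX Y dY f g \<le> max D (D + C)"
    unfolding GH_cost_def D_def C_def
    by (intro max.mono order_refl codis_le_dis_plus_codis_alt[OF assms])
  also have "\<dots> = D + C"
    by (simp add: max_absorb2)
  also have "\<dots> \<le> 2 * max D C"
    unfolding mult_2 by (intro add_mono max.cobounded1 max.cobounded2)
  finally show ?thesis
    unfolding GH_cost_alt_def D_def C_def .
qed

theorem proposition5p10:
  fixes X :: "'a set" and dX :: "'a \<Rightarrow> 'a \<Rightarrow> real"
    and Y :: "'b set" and dY :: "'b \<Rightarrow> 'b \<Rightarrow> real"
  assumes "Metric_space X dX" and "Metric_space Y dY"
  shows "GH_dist_alt X dX Y dY \<le> GH_dist X dX Y dY \<and> GH_dist X dX Y dY \<le> 2 * GH_dist_alt X dX Y dY"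
proof
  let ?S = "{(f, g). f \<in> X \<rightarrow> Y \<and> g \<in> Y \<rightarrow> X}"
  let ?I = "INF fg\<in>?S. GH_cost X dX Y dY (fst fg) (snd fg)"
  let ?I_alt = "INF fg\<in>?S. GH_cost_alt X dX Y dY (fst fg) (snd fg)"
  have "?I_alt \<le> ?I"
    by (intro INF_superset_mono order_refl) (auto intro: GH_cost_alt_le_GH_cost[OF assms])
  then show "GH_dist_alt X dX Y dY \<le> GH_dist X dX Y dY"
    unfolding GH_dist_eq_INF_GH_cost GH_dist_alt_eq_INF_GH_cost_alt
    by (rule divide_right_mono_ennreal)
  have "GH_dist X dX Y dY \<le> ?I_alt"
    unfolding GH_dist_eq_INF_GH_cost
    by (rule INF_divide_le_INF_ennreal) (auto intro: GH_cost_le_twice_GH_cost_alt[OF assms])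
  also have "\<dots> = 2 * GH_dist_alt X dX Y dY"
    unfolding GH_dist_alt_eq_INF_GH_cost_alt ennreal_times_divide
    by (subst mult.commute) (simp add: ennreal_mult_divide_eq)
  finally show "GH_dist X dX Y dY \<le> 2 * GH_dist_alt X dX Y dY" .
qed

end
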